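(* Let $L\ge n\ge 1$ and let $q(x)\in\mathrm{GF}(2)[x]/(x^L+1)$ be nonzero, represented as a polynomial of degree at most $n-1$. Let $S$ be a set of $n-1$ bit positions consecutive modulo $L$. If $w$ is chosen uniformly at random in $\mathrm{GF}(2)[x]/(x^L+1)$, then for every $y$, the probability that $q(x)w\bmod(x^L+1)$ and $y$ agree in every bit position outside $S$ equals $2^{-(L-n+1)}$.
   Context: Elements of $\mathrm{GF}(2)[x]/(x^L+1)$ are identified with polynomials $\sum_{i=0}^{L-1}c_ix^i$ over $\mathrm{GF}(2)$; bit position $i$ refers to the coefficient of $x^i$. A set of $m$ positions is consecutive modulo $L$ if it equals $\{k\bmod L,\dots,(k+m-1)\bmod L\}$ for some integer $k$. *)

theory Defs
  imports "HOL-Computational_Algebra.Polynomial" "HOL-Library.Z2"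
begin

text \<open>GF(2) is the type bit. Elements of GF(2)[x]/(x^L+1) are represented by their
  canonical representatives: polynomials over GF(2) of degree less than L.\<close>

definition cyc_modulus :: "nat \<Rightarrow> bit poly" where
  "cyc_modulus L = monom 1 L + 1"

definition cyc_ring :: "nat \<Rightarrow> bit poly set" where
  "cyc_ring L = {p. degree p < L}"

definition cyc_mult :: "nat \<Rightarrow> bit poly \<Rightarrow> bit poly \<Rightarrow> bit poly" where
  "cyc_mult L a b = (a * b) mod cyc_modulus L"

definition consecutive_mod :: "nat \<Rightarrow> nat \<Rightarrow> nat set \<Rightarrow> bool" where
  "consecutive_mod L m S \<longleftrightarrow> (\<exists>k::int. S = (\<lambda>i. nat ((k + int i) mod int L)) ` {..<m})"

end

theory Submission
  imports Defs
begin

(* Agreement of q*w mod (x^L + 1) with y outside S is a system of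
   L - n + 1 linear equations over GF(2) in the L coefficients of w; we show that it
   has exactly 2^(n-1) solutions for every y, so the probability is 2^(n-1) / 2^L.

   1. Coefficient i of the cyclic product is the cyclic convolution
      sum_j q_j * w_((i - j) mod L)                                  (cyc_mult_coeff).
   2. S = {b, ..., b + n - 2} (mod L).  Reading coefficients from position b on
      (cyc_pos, cyc_coords) identifies the ring with functions supported on {0..<L},
      turns the positions outside S into the window n - 1 .. L - 1, and there the
      cyclic convolution becomes an ordinary one      (cyc_mult_coeff_rotated).
   3. A "triangular" system v r = F r v (r in D), where F r only reads v below r,
      has |A|^(N - |D|) solutions supported on {0..<N}  (card_triangular_solutions).
   4. If a is the lowest index with q_a = 1, the equation at window position s reads
      v (s - a) = y_s - sum_{a < j <= s} q_j * v (s - j): a triangular system with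
      L - n + 1 equations, hence 2^(n-1) solutions       (card_agreeing_products). *)

lemma bitpoly_add_self: "(p :: bit poly) + p = 0"
  by (rule poly_eqI) (simp only: coeff_add coeff_0, simp)

lemma degree_cyc_modulus: "L > 0 \<Longrightarrow> degree (cyc_modulus L) = L"
  unfolding cyc_modulus_def by (simp add: degree_add_eq_left degree_monom_eq)

text \<open>Since x^L = 1 modulo x^L + 1, reducing a monomial just reduces its exponent mod L.\<close>
lemma monom_mod_cyc_modulus:
  assumes L: "L > 0"
  shows "monom (c :: bit) e mod cyc_modulus L = monom c (e mod L)"
proof (induction e rule: less_induct)
  case (less e)
  show ?case
  proof (cases "e < L")
    case True
    then show ?thesis
      using L by (cases "c = 0") (simp_all add: mod_poly_less degree_cyc_modulus degree_monom_eq)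
  next
    case False
    have "monom c e = monom c (e - L) * monom 1 L"
      using False by (simp add: mult_monom)
    also have "monom (1 :: bit) L = cyc_modulus L + 1"
      unfolding cyc_modulus_def by (simp add: add.assoc bitpoly_add_self)
    finally have "monom c e = monom c (e - L) * cyc_modulus L + monom c (e - L)"
      by (simp add: algebra_simps)
    then have "monom c e mod cyc_modulus L = monom c (e - L) mod cyc_modulus L"
      by simp
    also have "\<dots> = monom c ((e - L) mod L)"
      using less L False by simp
    also have "(e - L) mod L = e mod L"
      using False by (simp add: le_mod_geq)
    finally show ?thesis .
  qed
qed

lemma mod_add_eq_iff:
  fixes i j k L :: nat
  assumes "j < L" "k < L" "i < L"
  shows "(j + k) mod L = i \<longleftrightarrow> k = (i + L - j) mod L"
proof -
  have "(j + k) mod L = (if j + k < L then j + k else j + k - L)"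
    using assms by (auto simp: le_mod_geq)
  moreover have "(i + L - j) mod L = (if i + L - j < L then i + L - j else i + L - j - L)"
    using assms by (auto simp: le_mod_geq)
  ultimately show ?thesis using assms by auto
qed

lemma cyc_mult_coeff:
  assumes L: "L > 0" and q: "degree q < L" and w: "degree w < L" and i: "i < L"
  shows "coeff (cyc_mult L q w) i = (\<Sum>j<L. coeff q j * coeff w ((i + L - j) mod L))"
proof -
  define m where "m = cyc_modulus L"
  define R where "R = (\<Sum>j<L. \<Sum>k<L. monom (coeff q j * coeff w k) ((j + k) mod L))"
  have below_L: "{..L - 1} = {..<L}" using L by auto
  have "q * w = (\<Sum>j<L. monom (coeff q j) j) * (\<Sum>k<L. monom (coeff w k) k)"
    using poly_as_sum_of_monoms'[of q "L - 1"] poly_as_sum_of_monoms'[of w "L - 1"] q w below_L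
    by simp
  also have "\<dots> = (\<Sum>j<L. \<Sum>k<L. monom (coeff q j * coeff w k) (j + k))"
    by (simp add: sum_product mult_monom)
  finally have qw: "q * w = \<dots>" .
  have "m dvd (q * w - R)"
    unfolding qw R_def sum_subtractf[symmetric]
    by (intro dvd_sum) (simp add: mod_eq_dvd_iff[symmetric] m_def monom_mod_cyc_modulus[OF L])
  then have "(q * w) mod m = R mod m" by (simp add: mod_eq_dvd_iff)
  also have "R mod m = R"
  proof (rule mod_poly_less)
    have "coeff R t = 0" if "t > L - 1" for t
    proof -
      have "(j + k) mod L \<noteq> t" for j k
        using mod_less_divisor[of L "j + k"] L that by linarith
      then show ?thesis unfolding R_def coeff_sum coeff_monom by simp
    qed
    then have "degree R \<le> L - 1" by (intro degree_le) auto
    then show "degree R < degree m" using L by (simp add: m_def degree_cyc_modulus)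
  qed
  finally have product: "cyc_mult L q w = R" by (simp add: cyc_mult_def m_def)
  have "coeff R i = (\<Sum>j<L. \<Sum>k<L. if k = (i + L - j) mod L then coeff q j * coeff w k else 0)"
    unfolding R_def coeff_sum coeff_monom
    by (intro sum.cong refl) (use i in \<open>auto simp: mod_add_eq_iff\<close>)
  also have "\<dots> = (\<Sum>j<L. coeff q j * coeff w ((i + L - j) mod L))"
    using L by (simp add: sum.delta')
  finally show ?thesis using product by simp
qed

definition cyc_pos :: "nat \<Rightarrow> nat \<Rightarrow> nat \<Rightarrow> nat" where
  "cyc_pos L b t = (b + t) mod L"

lemma cyc_pos_inverse:
  assumes "b < L"
  shows "t < L \<Longrightarrow> (cyc_pos L b t + L - b) mod L = t"
    and "i < L \<Longrightarrow> cyc_pos L b ((i + L - b) mod L) = i"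
  using mod_add_eq_iff[OF assms, of t "(b + t) mod L"]
    mod_add_eq_iff[OF assms, of "(i + L - b) mod L" i] assms
  unfolding cyc_pos_def by auto

lemma cyc_pos_bij: "b < L \<Longrightarrow> bij_betw (cyc_pos L b) {..<L} {..<L}"
  by (rule bij_betw_byWitness[where f' = "\<lambda>i. (i + L - b) mod L"])
    (auto simp: cyc_pos_inverse, simp add: cyc_pos_def)

lemma consecutive_mod_cyc_pos:
  assumes "L > 0" "consecutive_mod L m S"
  shows "\<exists>b<L. S = cyc_pos L b ` {..<m}"
proof -
  obtain k :: int where k: "S = (\<lambda>i. nat ((k + int i) mod int L)) ` {..<m}"
    using assms(2) unfolding consecutive_mod_def by blast
  define b where "b = nat (k mod int L)"
  have "nat ((k + int t) mod int L) = cyc_pos L b t" for t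
  proof -
    have "int (cyc_pos L b t) = (k mod int L + int t) mod int L"
      using assms(1) unfolding cyc_pos_def b_def by (simp add: of_nat_mod)
    also have "\<dots> = (k + int t) mod int L" by (simp add: mod_add_left_eq)
    finally show ?thesis by (metis nat_int)
  qed
  moreover have "b < L" using assms(1) unfolding b_def by (simp add: nat_less_iff)
  ultimately show ?thesis unfolding k by auto
qed

lemma outside_consecutive_iff:
  assumes "b < L" "m \<le> L" "S = cyc_pos L b ` {..<m}"
  shows "(\<forall>i<L. i \<notin> S \<longrightarrow> P i) \<longleftrightarrow> (\<forall>s\<in>{m..<L}. P (cyc_pos L b s))"
proof -
  have inj: "inj_on (cyc_pos L b) {..<L}" and onto: "cyc_pos L b ` {..<L} = {..<L}"
    using cyc_pos_bij[OF assms(1)] by (simp_all add: bij_betw_def)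
  have "cyc_pos L b ` ({..<L} - {..<m}) = cyc_pos L b ` {..<L} - cyc_pos L b ` {..<m}"
    using assms(2) by (intro inj_on_image_set_diff[OF inj]) auto
  moreover have "{..<L} - {..<m} = {m..<L}" by auto
  ultimately have "{..<L} - S = cyc_pos L b ` {m..<L}"
    unfolding assms(3) onto by simp
  moreover have "(\<forall>i<L. i \<notin> S \<longrightarrow> P i) \<longleftrightarrow> (\<forall>i\<in>{..<L} - S. P i)" by auto
  ultimately show ?thesis by simp
qed

definition cyc_coords :: "nat \<Rightarrow> nat \<Rightarrow> bit poly \<Rightarrow> nat \<Rightarrow> bit" where
  "cyc_coords L b w t = (if t < L then coeff w (cyc_pos L b t) else 0)"

lemma cyc_coords_bij:
  assumes "b < L"
  shows "bij_betw (cyc_coords L b) (cyc_ring L) {v. \<forall>t\<ge>L. v t = 0}"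
proof -
  define \<psi> where "\<psi> v = Poly (map (\<lambda>i. v ((i + L - b) mod L)) [0..<L])" for v :: "nat \<Rightarrow> bit"
  have coeff_\<psi>: "coeff (\<psi> v) i = (if i < L then v ((i + L - b) mod L) else 0)" for v i
    unfolding \<psi>_def by (simp add: nth_default_def)
  have pos_L: "cyc_pos L b t < L" for t
    using assms unfolding cyc_pos_def by simp
  have "degree (\<psi> v) < L" for v
    using assms by (intro degree_lessI) (auto simp: coeff_\<psi>)
  then show ?thesis
    by (intro bij_betw_byWitness[where f' = \<psi>])
      (auto intro!: poly_eqI simp: fun_eq_iff coeff_\<psi> cyc_coords_def pos_L cyc_pos_inverse[OF assms]
        cyc_ring_def coeff_eq_0)
qed

text \<open>From position deg q on, the cyclic convolution is an ordinary convolution in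
  rotated coordinates: no wrap-around term meets a nonzero coefficient of q.\<close>
lemma cyc_mult_coeff_rotated:
  assumes b: "b < L" and s: "degree q \<le> s" "s < L" and w: "w \<in> cyc_ring L"
  shows "coeff (cyc_mult L q w) (cyc_pos L b s) = (\<Sum>j\<le>s. coeff q j * cyc_coords L b w (s - j))"
proof -
  have pos_L: "cyc_pos L b t < L" for t
    using b unfolding cyc_pos_def by simp
  have shift: "(cyc_pos L b s + L - j) mod L = cyc_pos L b (s - j)" if "j \<le> s" for j
  proof -
    have "(j + cyc_pos L b (s - j)) mod L = cyc_pos L b s"
      using that unfolding cyc_pos_def by (simp add: mod_add_right_eq)
    then show ?thesis using mod_add_eq_iff[of j L] that s pos_L by simp
  qed
  have "coeff (cyc_mult L q w) (cyc_pos L b s)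
        = (\<Sum>j<L. coeff q j * coeff w ((cyc_pos L b s + L - j) mod L))"
    using w s b by (intro cyc_mult_coeff) (auto simp: cyc_ring_def pos_L)
  also have "\<dots> = (\<Sum>j\<le>s. coeff q j * coeff w ((cyc_pos L b s + L - j) mod L))"
    using s by (intro sum.mono_neutral_right) (auto simp: coeff_eq_0)
  also have "\<dots> = (\<Sum>j\<le>s. coeff q j * cyc_coords L b w (s - j))"
    using s by (intro sum.cong) (auto simp: shift cyc_coords_def)
  finally show ?thesis .
qed

definition triangular :: "nat set \<Rightarrow> (nat \<Rightarrow> (nat \<Rightarrow> 'a) \<Rightarrow> 'a) \<Rightarrow> bool" where
  "triangular D F \<longleftrightarrow> (\<forall>r\<in>D. \<forall>v v'. (\<forall>i<r. v i = v' i) \<longrightarrow> F r v = F r v')"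

definition triangular_solutions ::
    "nat set \<Rightarrow> (nat \<Rightarrow> (nat \<Rightarrow> 'a::zero) \<Rightarrow> 'a) \<Rightarrow> nat \<Rightarrow> (nat \<Rightarrow> 'a) set" where
  "triangular_solutions D F N = {v. (\<forall>i\<ge>N. v i = 0) \<and> (\<forall>r\<in>D. r < N \<longrightarrow> v r = F r v)}"

lemma triangular_update_irrelevant:
  "triangular D F \<Longrightarrow> r \<in> D \<Longrightarrow> r < N \<Longrightarrow> F r (v(N := c)) = F r v"
  unfolding triangular_def by auto

lemma triangular_solutions_Suc_free:
  assumes "triangular D F" "N \<notin> D"
  shows "triangular_solutions D F (Suc N)
           = (\<lambda>(v, c). v(N := c)) ` (triangular_solutions D F N \<times> UNIV)"
proof
  show "triangular_solutions D F (Suc N) \<subseteq> (\<lambda>(v, c). v(N := c)) ` (triangular_solutions D F N \<times> UNIV)"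
  proof
    fix u assume u: "u \<in> triangular_solutions D F (Suc N)"
    have "u(N := 0) \<in> triangular_solutions D F N"
      using u assms by (auto simp: triangular_solutions_def triangular_update_irrelevant)
    then show "u \<in> (\<lambda>(v, c). v(N := c)) ` (triangular_solutions D F N \<times> UNIV)"
      by (intro image_eqI[where x = "(u(N := 0), u N)"]) auto
  qed
  show "(\<lambda>(v, c). v(N := c)) ` (triangular_solutions D F N \<times> UNIV) \<subseteq> triangular_solutions D F (Suc N)"
    using assms
    by (auto simp: triangular_solutions_def triangular_update_irrelevant less_Suc_eq)
qed

lemma triangular_solutions_Suc_constrained:
  assumes "triangular D F" "N \<in> D"
  shows "triangular_solutions D F (Suc N)
           = (\<lambda>v. v(N := F N v)) ` triangular_solutions D F N"
proof
  have F_N: "F N (v(N := c)) = F N v" for v c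
    using assms unfolding triangular_def by auto
  show "triangular_solutions D F (Suc N) \<subseteq> (\<lambda>v. v(N := F N v)) ` triangular_solutions D F N"
  proof
    fix u assume u: "u \<in> triangular_solutions D F (Suc N)"
    have "u(N := 0) \<in> triangular_solutions D F N"
      using u assms by (auto simp: triangular_solutions_def triangular_update_irrelevant)
    moreover have "u = (u(N := 0))(N := F N (u(N := 0)))"
      using u assms(2) by (auto simp: triangular_solutions_def F_N)
    ultimately show "u \<in> (\<lambda>v. v(N := F N v)) ` triangular_solutions D F N"
      by blast
  qed
  show "(\<lambda>v. v(N := F N v)) ` triangular_solutions D F N \<subseteq> triangular_solutions D F (Suc N)"
    using assms
    by (auto simp: triangular_solutions_def triangular_update_irrelevant F_N less_Suc_eq)
qed

lemma triangular_solutions_top_zero: "v \<in> triangular_solutions D F N \<Longrightarrow> v N = 0"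
  unfolding triangular_solutions_def by simp

text \<open>Each unconstrained coordinate multiplies the number of solutions by |A|.\<close>
lemma card_triangular_solutions:
  fixes F :: "nat \<Rightarrow> (nat \<Rightarrow> 'a::zero) \<Rightarrow> 'a"
  assumes "finite (UNIV :: 'a set)" "triangular D F"
  shows "card (triangular_solutions D F N) = card (UNIV :: 'a set) ^ (N - card (D \<inter> {..<N}))"
proof (induction N)
  case 0
  have "triangular_solutions D F 0 = {\<lambda>_. 0}"
    by (auto simp: triangular_solutions_def)
  then show ?case by simp
next
  case (Suc N)
  have card_le: "card (D \<inter> {..<N}) \<le> N"
    by (metis card_lessThan card_mono finite_lessThan inf_le2)
  show ?case
  proof (cases "N \<in> D")
    case True
    have "inj_on (\<lambda>v. v(N := F N v)) (triangular_solutions D F N)"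
      by (rule inj_onI) (metis fun_upd_upd fun_upd_triv triangular_solutions_top_zero)
    moreover have "D \<inter> {..<Suc N} = insert N (D \<inter> {..<N})" using True by auto
    ultimately show ?thesis
      using Suc card_le True assms
      by (simp add: triangular_solutions_Suc_constrained card_image Suc_diff_le)
  next
    case False
    have "inj_on (\<lambda>(v, c). v(N := c)) (triangular_solutions D F N \<times> (UNIV :: 'a set))"
    proof (rule inj_onI, clarify)
      fix v c v' c'
      assume "v \<in> triangular_solutions D F N" "v' \<in> triangular_solutions D F N"
        and "v(N := c) = v'(N := c')"
      then show "v = v' \<and> c = c'"
        by (metis fun_upd_same fun_upd_upd fun_upd_triv triangular_solutions_top_zero)
    qed
    moreover have "D \<inter> {..<Suc N} = D \<inter> {..<N}" using False by (auto simp: less_Suc_eq)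
    ultimately show ?thesis
      using Suc card_le False assms
      by (simp add: triangular_solutions_Suc_free card_image card_cartesian_product Suc_diff_le)
  qed
qed

lemma convolution_split_lowest:
  fixes q :: "'a::comm_semiring_1 poly"
  assumes "\<forall>j<a. coeff q j = 0" "a \<le> s"
  shows "(\<Sum>j\<le>s. coeff q j * v (s - j))
           = coeff q a * v (s - a) + (\<Sum>j\<in>{a<..s}. coeff q j * v (s - j))"
proof -
  define f where "f j = coeff q j * v (s - j)" for j
  have "{..s} = {..<a} \<union> {a..s}" using assms(2) by auto
  then have "(\<Sum>j\<le>s. f j) = (\<Sum>j<a. f j) + (\<Sum>j\<in>{a..s}. f j)"
    by (subst sum.union_disjoint[symmetric]) auto
  also have "(\<Sum>j<a. f j) = 0" using assms(1) by (simp add: f_def)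
  also have "(\<Sum>j\<in>{a..s}. f j) = f a + (\<Sum>j\<in>{a<..s}. f j)"
    using assms(2) by (simp add: sum.atLeast_Suc_atMost atLeastSucAtMost_greaterThanAtMost)
  finally show ?thesis by (simp add: f_def)
qed

text \<open>The right-hand side of the equation solved for v r, which comes from the window
  position s = r + a.\<close>
definition agreement_system :: "nat \<Rightarrow> nat \<Rightarrow> bit poly \<Rightarrow> bit poly \<Rightarrow> nat \<Rightarrow> nat \<Rightarrow> (nat \<Rightarrow> bit) \<Rightarrow> bit" where
  "agreement_system L b q y a r v =
     coeff y (cyc_pos L b (r + a)) - (\<Sum>j\<in>{a<..r + a}. coeff q j * v (r + a - j))"

lemma triangular_agreement_system: "triangular D (agreement_system L b q y a)"
  unfolding triangular_def agreement_system_def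
proof (intro ballI allI impI)
  fix r and v v' :: "nat \<Rightarrow> bit"
  assume "\<forall>i<r. v i = v' i"
  then have "(\<Sum>j\<in>{a<..r + a}. coeff q j * v (r + a - j)) = (\<Sum>j\<in>{a<..r + a}. coeff q j * v' (r + a - j))"
    by (intro sum.cong) auto
  then show "coeff y (cyc_pos L b (r + a)) - (\<Sum>j\<in>{a<..r + a}. coeff q j * v (r + a - j))
           = coeff y (cyc_pos L b (r + a)) - (\<Sum>j\<in>{a<..r + a}. coeff q j * v' (r + a - j))"
    by (simp only:)
qed

lemma product_agreement_triangular:
  assumes b: "b < L" and n: "n \<le> L" and q: "degree q \<le> n - 1"
    and a: "\<forall>j<a. coeff q j = 0" "coeff q a = 1" "a \<le> n - 1"
    and w: "w \<in> cyc_ring L"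
  shows "(\<forall>s\<in>{n - 1..<L}. coeff (cyc_mult L q w) (cyc_pos L b s) = coeff y (cyc_pos L b s))
         \<longleftrightarrow> cyc_coords L b w \<in> triangular_solutions {n - 1 - a..<L - a} (agreement_system L b q y a) L"
proof -
  define v where "v = cyc_coords L b w"
  define D where "D = {n - 1 - a..<L - a}"
  have agree_iff: "coeff (cyc_mult L q w) (cyc_pos L b (r + a)) = coeff y (cyc_pos L b (r + a))
                   \<longleftrightarrow> v r = agreement_system L b q y a r v" if r: "r \<in> D" for r
  proof -
    have "coeff (cyc_mult L q w) (cyc_pos L b (r + a)) = (\<Sum>j\<le>r + a. coeff q j * v (r + a - j))"
      unfolding v_def using r q b w D_def by (intro cyc_mult_coeff_rotated) auto
    also have "\<dots> = v r + (\<Sum>j\<in>{a<..r + a}. coeff q j * v (r + a - j))"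
      using convolution_split_lowest[OF a(1), of "r + a" v] r a(3) unfolding D_def
      by (simp only: a(2) mult_1 add_diff_cancel_right')
    finally show ?thesis by (simp only: agreement_system_def eq_diff_eq)
  qed
  have "{n - 1..<L} = (\<lambda>r. r + a) ` D"
    unfolding D_def using a(3) n by (auto simp: image_iff intro!: bexI[where x = "_ - a"])
  then have "(\<forall>s\<in>{n - 1..<L}. coeff (cyc_mult L q w) (cyc_pos L b s) = coeff y (cyc_pos L b s))
             \<longleftrightarrow> (\<forall>r\<in>D. v r = agreement_system L b q y a r v)"
    using agree_iff by auto
  moreover have "(\<forall>t\<ge>L. v t = 0)" unfolding v_def cyc_coords_def by simp
  ultimately show ?thesis
    unfolding triangular_solutions_def v_def[symmetric] D_def[symmetric] by (auto simp: D_def)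
qed

lemma UNIV_bit: "(UNIV :: bit set) = {0, 1}"
  by (auto intro: bit.exhaust)

lemma finite_UNIV_bit: "finite (UNIV :: bit set)"
  unfolding UNIV_bit by (simp only: finite_insert finite.emptyI)

lemma card_UNIV_bit: "card (UNIV :: bit set) = 2"
  unfolding UNIV_bit using card_2_iff zero_neq_one by metis

lemma card_bij_preimage:
  assumes "bij_betw f A B" "T \<subseteq> B"
  shows "card {x \<in> A. f x \<in> T} = card T"
proof -
  have "T \<subseteq> f ` A" using assms by (simp add: bij_betw_def)
  then have image: "f ` {x \<in> A. f x \<in> T} = T" by (auto intro: rev_image_eqI)
  have "bij_betw f {x \<in> A. f x \<in> T} T"
    by (rule bij_betw_subset[OF assms(1) _ image]) auto
  then show ?thesis by (rule bij_betw_same_card)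
qed

text \<open>The ring has 2^L elements (the empty triangular system).\<close>
lemma card_cyc_ring:
  assumes "L > 0"
  shows "card (cyc_ring L) = 2 ^ L"
proof -
  let ?F = "\<lambda>_ _. 0 :: bit"
  have "{v. \<forall>t\<ge>L. v t = 0} = triangular_solutions {} ?F L"
    by (simp add: triangular_solutions_def)
  then have "card (cyc_ring L) = card (triangular_solutions {} ?F L)"
    using cyc_coords_bij[of 0 L] assms by (simp add: bij_betw_same_card)
  also have "\<dots> = card (UNIV :: bit set) ^ (L - card ({} \<inter> {..<L}))"
    by (rule card_triangular_solutions[OF finite_UNIV_bit]) (simp add: triangular_def)
  finally show ?thesis by (simp add: card_UNIV_bit)
qed

lemma lowest_coeff_bit:
  assumes "(q :: bit poly) \<noteq> 0"
  obtains a where "a \<le> degree q" "coeff q a = 1" "\<forall>j<a. coeff q j = 0"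
proof
  have lead: "coeff q (degree q) \<noteq> 0" using assms by simp
  define a where "a = (LEAST j. coeff q j \<noteq> 0)"
  show "a \<le> degree q" unfolding a_def using Least_le[of "\<lambda>j. coeff q j \<noteq> 0", OF lead] .
  show "coeff q a = 1" unfolding a_def using LeastI[of "\<lambda>j. coeff q j \<noteq> 0", OF lead] by simp
  show "\<forall>j<a. coeff q j = 0" unfolding a_def using not_less_Least by blast
qed

lemma card_agreeing_products:
  assumes b: "b < L" and n: "1 \<le> n" "n \<le> L" and q: "q \<noteq> 0" "degree q \<le> n - 1"
  shows "card {w \<in> cyc_ring L. \<forall>s\<in>{n - 1..<L}.
                 coeff (cyc_mult L q w) (cyc_pos L b s) = coeff y (cyc_pos L b s)} = 2 ^ (n - 1)"
proof -
  obtain a where "a \<le> degree q" and a_coeff: "coeff q a = 1" "\<forall>j<a. coeff q j = 0"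
    using lowest_coeff_bit[OF q(1)] .
  then have a_le: "a \<le> n - 1" using q(2) by simp
  define D where "D = {n - 1 - a..<L - a}"
  define T where "T = triangular_solutions D (agreement_system L b q y a) L"
  have "{w \<in> cyc_ring L. \<forall>s\<in>{n - 1..<L}.
           coeff (cyc_mult L q w) (cyc_pos L b s) = coeff y (cyc_pos L b s)}
        = {w \<in> cyc_ring L. cyc_coords L b w \<in> T}"
    using product_agreement_triangular[OF b n(2) q(2) a_coeff(2,1) a_le] unfolding T_def D_def
    by (simp cong: conj_cong)
  also have "card \<dots> = card T"
    using cyc_coords_bij[OF b] by (rule card_bij_preimage) (auto simp: T_def triangular_solutions_def)
  also have "\<dots> = 2 ^ (L - card (D \<inter> {..<L}))"
    unfolding T_def using card_triangular_solutions[OF finite_UNIV_bit triangular_agreement_system] card_UNIV_bit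
    by simp
  also have "D \<inter> {..<L} = D" unfolding D_def by auto
  also have "L - card D = n - 1" using a_le n unfolding D_def by simp
  finally show ?thesis .
qed

theorem mainTheorem7:
  fixes L n :: nat and q y :: "bit poly" and S :: "nat set"
  assumes "1 \<le> n" and "n \<le> L"
    and "q \<noteq> 0" and "degree q \<le> n - 1"
    and "consecutive_mod L (n - 1) S"
    and "y \<in> cyc_ring L"
  shows "real (card {w \<in> cyc_ring L. \<forall>i<L. i \<notin> S \<longrightarrow>
                 coeff (cyc_mult L q w) i = coeff y i}) / real (card (cyc_ring L))
         = 1 / 2 ^ (L - n + 1)"
proof -
  have L: "L > 0" using assms(1,2) by linarith
  obtain b where b: "b < L" and S: "S = cyc_pos L b ` {..<n - 1}"
    using consecutive_mod_cyc_pos[OF L assms(5)] by blast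
  have "{w \<in> cyc_ring L. \<forall>i<L. i \<notin> S \<longrightarrow> coeff (cyc_mult L q w) i = coeff y i}
        = {w \<in> cyc_ring L. \<forall>s\<in>{n - 1..<L}.
             coeff (cyc_mult L q w) (cyc_pos L b s) = coeff y (cyc_pos L b s)}"
    using outside_consecutive_iff[OF b _ S] assms(2) by (simp only: diff_le_self le_trans)
  then have "card {w \<in> cyc_ring L. \<forall>i<L. i \<notin> S \<longrightarrow> coeff (cyc_mult L q w) i = coeff y i}
             = 2 ^ (n - 1)"
    using card_agreeing_products[OF b assms(1-4)] by simp
  moreover have "(2::real) ^ L = 2 ^ (n - 1) * 2 ^ (L - n + 1)"
    using power_add[of "2::real" "n - 1" "L - n + 1"] assms(1,2) by simp
  ultimately show ?thesis using card_cyc_ring[OF L] by simp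
qed

end
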